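(* Let $f_1,\dots,f_m\in\mathbb{C}[x_1,\dots,x_n]$ and consider an action-matrix solver for the action polynomial $f=x_1$, given by the data described in the context: the basis monomials $B_a=\{\mathbf{x}^{\alpha_1},\dots,\mathbf{x}^{\alpha_r}\}$, the reducible monomials $B_r$, the reduced excess monomials $\hat B_e$, the elimination template $\hat{\mathbf{C}}=\begin{bmatrix}\hat{\mathbf{C}}_{11}&\mathbf{C}_{12}&\mathbf{C}_{13}\\ \hat{\mathbf{C}}_{21}&\mathbf{C}_{22}&\mathbf{C}_{23}\end{bmatrix}$ with Gauss–Jordan form $\begin{bmatrix}\mathbf{I}&\mathbf{0}&\hat{\mathbf{C}}'_{13}\\ \mathbf{0}&\mathbf{I}&\mathbf{C}'_{23}\end{bmatrix}$, and the action matrix $\mathbf{M}_f$. Construct the sparse resultant matrix $$\mathbf{M}(u_0)=\begin{bmatrix}\mathbf{A}_{11}&\mathbf{A}_{12}\\ \mathbf{A}_{21}-u_0\mathbf{I}&\mathbf{A}_{22}\end{bmatrix},\qquad \mathbf{A}_{11}=\begin{bmatrix}\mathbf{C}_{13}\\ \mathbf{C}_{23}\end{bmatrix},\quad \mathbf{A}_{12}=\begin{bmatrix}\hat{\mathbf{C}}_{11}&\mathbf{C}_{12}\\ \hat{\mathbf{C}}_{21}&\mathbf{C}_{22}\end{bmatrix},$$ with columns indexed by $\mathbf{b}_1=\mathbf{b}_a$ followed by $\mathbf{b}_2=(\hat{\mathbf{b}}_e,\mathbf{b}_r)$, where the $j$-th row of the lower block $\begin{bmatrix}\mathbf{A}_{21}-u_0\mathbf{I}&\mathbf{A}_{22}\end{bmatrix}$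 is the coefficient vector, with respect to $(\mathbf{b}_1,\mathbf{b}_2)$, of the polynomial $\mathbf{x}^{\alpha_j}(x_1-u_0)$ (here $\mathbf{A}_{21}$ and $\mathbf{A}_{22}$ are $0/1$ matrices), and let $\mathbf{X}=\mathbf{A}_{21}-\mathbf{A}_{22}\mathbf{A}_{12}^{-1}\mathbf{A}_{11}$ be the Schur complement. Then the action-matrix solver and this sparse-resultant solver are equivalent: $\mathbf{X}=\mathbf{M}_f$, and the Gauss–Jordan elimination of $\hat{\mathbf{C}}$ can be replaced by the product $\mathbf{A}_{12}^{-1}\mathbf{A}_{11}$, namely $\mathbf{A}_{12}^{-1}\mathbf{A}_{11}=\begin{bmatrix}\hat{\mathbf{C}}'_{13}\\ \mathbf{C}'_{23}\end{bmatrix}$ (and $\hat{\mathbf{C}}$ has the same size as the upper block $\begin{bmatrix}\mathbf{A}_{11}&\mathbf{A}_{12}\end{bmatrix}$).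
   Context: Action-matrix solver data: $B_a=\{\mathbf{x}^{\alpha_1},\dots,\mathbf{x}^{\alpha_r}\}$ is a set of monomials whose cosets form a linear basis of the quotient ring $\mathbb{C}[x_1,\dots,x_n]/\langle f_1,\dots,f_m\rangle$; $B_r=\{x_1\mathbf{x}^{\alpha}\mid \mathbf{x}^{\alpha}\in B_a\}\setminus B_a$; monomial multiple sets $T_1,\dots,T_m$ give the extended system $\{t f_i : t\in T_i\}$, whose monomials are split as $B_e\sqcup B_r\sqcup B_a$; $\hat B_e\subseteq B_e$ is obtained by deleting excess monomials whose columns are linearly dependent. The elimination template $\hat{\mathbf{C}}$ is the coefficient matrix of the extended system with columns indexed by the ordered vectors $\hat{\mathbf{b}}_e,\mathbf{b}_r,\mathbf{b}_a$ of $\hat B_e,B_r,B_a$ (column blocks as displayed), rows partitioned so that $\mathbf{C}_{22}$ is square invertible, and such that $\begin{bmatrix}\hat{\mathbf{C}}_{11}&\mathbf{C}_{12}\\ \hat{\mathbf{C}}_{21}&\mathbf{C}_{22}\end{bmatrix}$ is square invertible, so its Gauss–Jordan form is $\begin{bmatrix}\mathbf{I}&\mathbf{0}&\hat{\mathbf{C}}'_{13}\\ \mathbf{0}&\mathbf{I}&\mathbf{C}'_{23}\end{bmatrix}$, the rows of $\mathbf{C}'_{23}$ being indexed by the monomials of $\mathbf{b}_r$. The $r\times r$ action matrix $\mathbf{M}_f$ ($f=x_1$) is defined row by row: if $x_1\mathbf{x}^{\alpha_j}=\mathbf{x}^{\alpha_i}\in B_a$, its $j$-th row has $1$ in column $i$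 and $0$ elsewhere; otherwise $x_1\mathbf{x}^{\alpha_j}$ is the $i$-th monomial of $\mathbf{b}_r$ and the $j$-th row of $\mathbf{M}_f$ is the $i$-th row of $-\mathbf{C}'_{23}$. *)

theory Defs
  imports "HOL-Library.Poly_Mapping" "Jordan_Normal_Form.Gauss_Jordan_Elimination"
    "HOL.Complex"
begin

(* Monomials x^alpha are exponent vectors (variable x_{k+1} has index k);
   polynomials in C[x_1,...,x_n] are finitely supported maps from monomials to C. *)
type_synonym mon = "nat \<Rightarrow>\<^sub>0 nat"
type_synonym cpoly = "mon \<Rightarrow>\<^sub>0 complex"

definition xmon :: "mon \<Rightarrow> cpoly" where
  "xmon \<alpha> = Poly_Mapping.single \<alpha> 1"

definition cconst :: "complex \<Rightarrow> cpoly" where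
  "cconst c = Poly_Mapping.single 0 c"

definition e1 :: mon where
  "e1 = Poly_Mapping.single 0 1"

definition x1 :: cpoly where
  "x1 = xmon e1"

definition in_vars :: "nat \<Rightarrow> cpoly \<Rightarrow> bool" where
  "in_vars n p \<longleftrightarrow> (\<forall>\<alpha>\<in>Poly_Mapping.keys p. Poly_Mapping.keys \<alpha> \<subseteq> {..<n})"

definition ideal_gen :: "nat \<Rightarrow> cpoly list \<Rightarrow> cpoly set" where
  "ideal_gen n fs = {(\<Sum>i<length fs. g i * fs ! i) | g. \<forall>i<length fs. in_vars n (g i)}"

definition quotient_basis :: "nat \<Rightarrow> cpoly list \<Rightarrow> mon list \<Rightarrow> bool" where
  "quotient_basis n fs ba \<longleftrightarrow>
     (\<forall>j<length ba. in_vars n (xmon (ba ! j))) \<and>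
     (\<forall>p. in_vars n p \<longrightarrow>
        (\<exists>c::nat \<Rightarrow> complex. p - (\<Sum>j<length ba. Poly_Mapping.single (ba ! j) (c j)) \<in> ideal_gen n fs)) \<and>
     (\<forall>c::nat \<Rightarrow> complex. (\<Sum>j<length ba. Poly_Mapping.single (ba ! j) (c j)) \<in> ideal_gen n fs
        \<longrightarrow> (\<forall>j<length ba. c j = 0))"

end

theory Submission
  imports Defs
begin

text \<open>
  Gauss--Jordan elimination of the template \<open>[A\<^sub>1\<^sub>2 | A\<^sub>1\<^sub>1]\<close> multiplies it on the left
  by an invertible \<open>P\<close>. The reduced left block \<open>P A\<^sub>1\<^sub>2\<close> is in row echelon form and
  invertible, hence the identity; so \<open>P = A\<^sub>1\<^sub>2\<^sup>-\<^sup>1\<close> and the reduced right block is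
  \<open>A\<^sub>1\<^sub>2\<^sup>-\<^sup>1 A\<^sub>1\<^sub>1\<close>. Row \<open>j\<close> of \<open>[A\<^sub>2\<^sub>1 | A\<^sub>2\<^sub>2]\<close> (the lower block at \<open>u\<^sub>0 = 0\<close>) is the indicator of the monomial
  \<open>x\<^sub>1 x\<^sup>\<alpha>\<^sup>j\<close>, which lies either in \<open>B\<^sub>a\<close> or in \<open>B\<^sub>r\<close>. In the first case row \<open>j\<close> of the
  Schur complement is the unit row of \<open>A\<^sub>2\<^sub>1\<close>; in the second \<open>A\<^sub>2\<^sub>1\<close> vanishes on that row
  and \<open>A\<^sub>2\<^sub>2\<close> selects the negated row of \<open>C'\<^sub>2\<^sub>3\<close> belonging to that monomial. These
  are exactly the rows of \<open>M\<^sub>f\<close>.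
\<close>

lemma row_echelon_form_prefix_cols:
  assumes C: "C \<in> carrier_mat n m" and k: "k \<le> m" and ref: "row_echelon_form C"
  shows "row_echelon_form (mat n k (\<lambda>(i, j). C $$ (i, j)))"
proof -
  from ref C obtain f where "pivot_fun C f m" unfolding row_echelon_form_def by auto
  note piv = pivot_funD[OF _ this, of n]
  let ?L = "mat n k (\<lambda>(i, j). C $$ (i, j))"
  have "pivot_fun ?L (\<lambda>i. min (f i) k) k"
  proof (rule pivot_funI)
    fix i assume i: "i < n"
    show "min (f i) k \<le> k" by simp
    show "?L $$ (i, j) = 0" if "j < min (f i) k" for j
      using piv(2)[OF _ i, of j] i that C by auto
    show "min (f (Suc i)) k > min (f i) k \<or> min (f (Suc i)) k = k" if "Suc i < n"
      using piv(3)[OF _ i that] piv(1)[OF _ that] k C by (auto simp: min_def)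
    assume fi: "min (f i) k < k"
    then have "f i < m" using k by auto
    then show "?L $$ (i, min (f i) k) = 1"
      using piv(4)[OF _ i] fi i C by (auto simp: min_def split: if_splits)
    show "?L $$ (i', min (f i) k) = 0" if "i' < n" "i' \<noteq> i" for i'
      using piv(5)[OF _ i \<open>f i < m\<close> that] fi i that C by (auto simp: min_def split: if_splits)
  qed simp
  then show ?thesis unfolding row_echelon_form_def by auto
qed

lemma row_echelon_form_right_invertible_eq_one:
  fixes A :: "'a :: semiring_1 mat"
  assumes A: "A \<in> carrier_mat n n" and B: "B \<in> carrier_mat n n"
    and AB: "A * B = 1\<^sub>m n" and ref: "row_echelon_form A"
  shows "A = 1\<^sub>m n"
proof (rule ccontr)
  assume "A \<noteq> 1\<^sub>m n"
  with row_echelon_form_imp_1_or_0_row[OF A ref]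
  have n: "n - 1 < n" and zero_row: "row A (n - 1) = 0\<^sub>v n" by auto
  have "1 = (A * B) $$ (n - 1, n - 1)" using AB n by simp
  also have "\<dots> = row A (n - 1) \<bullet> col B (n - 1)" using A B n by simp
  also have "\<dots> = 0" unfolding zero_row using B by (auto intro!: scalar_prod_left_zero carrier_vecI)
  finally show False by simp
qed

lemma mult_mat_select_cols:
  assumes P: "P \<in> carrier_mat k n" and C: "C \<in> carrier_mat n c"
    and f: "\<And>j. j < m \<Longrightarrow> f j < c"
  shows "P * mat n m (\<lambda>(i, j). C $$ (i, f j)) = mat k m (\<lambda>(i, j). (P * C) $$ (i, f j))"
proof (rule eq_matI)
  fix i j assume "i < dim_row (mat k m (\<lambda>(i, j). (P * C) $$ (i, f j)))"
    "j < dim_col (mat k m (\<lambda>(i, j). (P * C) $$ (i, f j)))"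
  then have i: "i < k" and j: "j < m" by auto
  have "col (mat n m (\<lambda>(i, j). C $$ (i, f j))) j = col C (f j)"
    using j f[OF j] C by (auto intro!: eq_vecI)
  then show "(P * mat n m (\<lambda>(i, j). C $$ (i, f j))) $$ (i, j) = mat k m (\<lambda>(i, j). (P * C) $$ (i, f j)) $$ (i, j)"
    using i j f[OF j] P C by simp
qed (use P in auto)

lemma invertible_mat_mat_inverse:
  fixes A :: "'a :: field mat"
  assumes A: "A \<in> carrier_mat n n" and inv: "invertible_mat A"
  shows "A * the (mat_inverse A) = 1\<^sub>m n" "the (mat_inverse A) * A = 1\<^sub>m n"
    "the (mat_inverse A) \<in> carrier_mat n n"
proof -
  from inv A obtain B where AB: "A * B = 1\<^sub>m n" and BA: "B * A = 1\<^sub>m (dim_row B)"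
    unfolding invertible_mat_def inverts_mat_def by auto
  have "B \<in> carrier_mat n n"
    using arg_cong[OF AB, of dim_col] arg_cong[OF BA, of dim_col] A by auto
  with AB BA A have "A \<in> Units (ring_mat TYPE('a) n ())"
    unfolding Units_def ring_mat_def by auto
  with mat_inverse(1)[OF A] obtain B' where "mat_inverse A = Some B'" by fastforce
  with mat_inverse(2)[OF A this]
  show "A * the (mat_inverse A) = 1\<^sub>m n" "the (mat_inverse A) * A = 1\<^sub>m n"
    "the (mat_inverse A) \<in> carrier_mat n n" by auto
qed

lemma gauss_jordan_single_right_block:
  fixes C :: "'a :: field mat"
  assumes C: "C \<in> carrier_mat n (n + m)"
    and inv: "invertible_mat (mat n n (\<lambda>(i, j). C $$ (i, j)))"
  shows "the (mat_inverse (mat n n (\<lambda>(i, j). C $$ (i, j)))) * mat n m (\<lambda>(i, j). C $$ (i, n + j))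
       = mat n m (\<lambda>(i, j). gauss_jordan_single C $$ (i, n + j))"
proof -
  define A where "A = mat n n (\<lambda>(i, j). C $$ (i, j))"
  define B where "B = the (mat_inverse A)"
  have A: "A \<in> carrier_mat n n" by (simp add: A_def)
  note B = invertible_mat_mat_inverse[OF A inv[folded A_def], folded B_def]
  define G where "G = gauss_jordan_single C"
  note gj = gauss_jordan_single[OF C G_def[symmetric]]
  from gj(4) obtain P Q where GP: "G = P * C" and P: "P \<in> carrier_mat n n"
    and Q: "Q \<in> carrier_mat n n" and PQ: "P * Q = 1\<^sub>m n" by auto
  have left_block: "mat n n (\<lambda>(i, j). G $$ (i, j)) = P * A"
    unfolding A_def GP using mult_mat_select_cols[OF P C, of n id] by simp
  have PA: "P * A = 1\<^sub>m n"
  proof (rule row_echelon_form_right_invertible_eq_one)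
    have "P * A * (B * Q) = P * (A * B) * Q"
      using P A B(3) Q by (simp add: assoc_mult_mat[of _ n n _ n _ n])
    then show "P * A * (B * Q) = 1\<^sub>m n" using B(1) PQ P by simp
    show "row_echelon_form (P * A)"
      unfolding left_block[symmetric] by (rule row_echelon_form_prefix_cols[OF gj(2) _ gj(3)]) simp
  qed (use P A B(3) Q in auto)
  have "P = B"
  proof -
    have "P = P * (A * B)" using B(1) P by simp
    also have "\<dots> = (P * A) * B" using P A B(3) by simp
    also have "\<dots> = B" unfolding PA using B(3) by simp
    finally show ?thesis .
  qed
  then have "B * mat n m (\<lambda>(i, j). C $$ (i, n + j)) = mat n m (\<lambda>(i, j). G $$ (i, n + j))"
    using mult_mat_select_cols[OF P C, of m "\<lambda>j. n + j"] by (simp add: GP)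
  then show ?thesis by (simp add: A_def B_def G_def)
qed

lemma mult_mat_indicator_row:
  fixes A B :: "'a :: semiring_1 mat"
  assumes A: "A \<in> carrier_mat m (length cs)" and B: "B \<in> carrier_mat (length cs) p"
    and j: "j < m" and i: "i < p"
    and row_j: "\<And>l. l < length cs \<Longrightarrow> A $$ (j, l) = (if cs ! l = c then 1 else 0)"
  shows "c \<notin> set cs \<Longrightarrow> (A * B) $$ (j, i) = 0"
    and "distinct cs \<Longrightarrow> k < length cs \<Longrightarrow> cs ! k = c \<Longrightarrow> (A * B) $$ (j, i) = B $$ (k, i)"
proof -
  have AB: "(A * B) $$ (j, i) = row A j \<bullet> col B i" using A B i j by simp
  show "(A * B) $$ (j, i) = 0" if "c \<notin> set cs"
  proof -
    have "row A j = 0\<^sub>v (length cs)" using A j row_j that by (auto intro!: eq_vecI)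
    then show ?thesis unfolding AB using B by (auto intro!: scalar_prod_left_zero carrier_vecI)
  qed
  show "(A * B) $$ (j, i) = B $$ (k, i)" if "distinct cs" "k < length cs" "cs ! k = c"
  proof -
    have "row A j = unit_vec (length cs) k"
    proof (rule eq_vecI)
      fix k' assume "k' < dim_vec (unit_vec (length cs) k)"
      then have k': "k' < length cs" by simp
      then have "(cs ! k' = c) = (k' = k)" using that nth_eq_iff_index_eq by metis
      then show "row A j $ k' = unit_vec (length cs) k $ k'" using A j k' row_j[OF k'] that(2) by simp
    qed (use A in simp)
    then show ?thesis unfolding AB using B i that(2) by simp
  qed
qed

lemma schur_complement_eq_action_matrix:
  fixes A21 A22 R D :: "'a :: ring_1 mat" and bs cs ds :: "'b list" and s :: "'b \<Rightarrow> 'b"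
  assumes A21: "A21 \<in> carrier_mat (length bs) (length bs)"
    and A22: "A22 \<in> carrier_mat (length bs) (length (cs @ ds))"
    and R: "R \<in> carrier_mat (length (cs @ ds)) (length bs)"
    and distinct: "distinct (cs @ ds)" and disjoint: "set (cs @ ds) \<inter> set bs = {}"
    and shift_closed: "\<And>j. j < length bs \<Longrightarrow> s (bs ! j) \<notin> set bs \<Longrightarrow> s (bs ! j) \<in> set ds"
    and A21_entry: "\<And>j i. j < length bs \<Longrightarrow> i < length bs \<Longrightarrow>
      A21 $$ (j, i) = (if bs ! i = s (bs ! j) then 1 else 0)"
    and A22_entry: "\<And>j k. j < length bs \<Longrightarrow> k < length (cs @ ds) \<Longrightarrow>
      A22 $$ (j, k) = (if (cs @ ds) ! k = s (bs ! j) then 1 else 0)"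
    and D_entry: "\<And>k i. k < length ds \<Longrightarrow> i < length bs \<Longrightarrow> D $$ (k, i) = R $$ (length cs + k, i)"
  shows "A21 - A22 * R = mat (length bs) (length bs) (\<lambda>(j, i).
           if s (bs ! j) \<in> set bs then (if bs ! i = s (bs ! j) then 1 else 0)
           else - D $$ (THE k. k < length ds \<and> ds ! k = s (bs ! j), i))" (is "_ = ?M")
proof (rule eq_matI)
  fix j i assume "j < dim_row ?M" "i < dim_col ?M"
  then have j: "j < length bs" and i: "i < length bs" by auto
  have entry: "(A21 - A22 * R) $$ (j, i) = A21 $$ (j, i) - (A22 * R) $$ (j, i)"
    using A22 R i j by simp
  show "(A21 - A22 * R) $$ (j, i) = ?M $$ (j, i)"
  proof (cases "s (bs ! j) \<in> set bs")
    case True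
    then have "s (bs ! j) \<notin> set (cs @ ds)" using disjoint by blast
    then have "(A22 * R) $$ (j, i) = 0"
      by (intro mult_mat_indicator_row(1)[OF A22 R j i, where c = "s (bs ! j)"])
        (simp_all add: A22_entry j)
    then show ?thesis using True entry A21_entry[OF j i] i j by simp
  next
    case False
    with shift_closed[OF j] obtain k where k: "k < length ds" "ds ! k = s (bs ! j)"
      by (auto simp: in_set_conv_nth)
    have "distinct ds" using distinct by simp
    with k have the_k: "(THE k. k < length ds \<and> ds ! k = s (bs ! j)) = k"
      by (intro the_equality) (simp_all add: nth_eq_iff_index_eq[symmetric])
    have "(A22 * R) $$ (j, i) = R $$ (length cs + k, i)"
      by (intro mult_mat_indicator_row(2)[OF A22 R j i, where c = "s (bs ! j)"] distinct)
        (simp_all add: A22_entry j k nth_append)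
    moreover have "A21 $$ (j, i) = 0" using A21_entry[OF j i] False nth_mem[OF i] by auto
    ultimately show ?thesis using False entry the_k D_entry[OF k(1) i] i j by simp
  qed
qed (use A22 R in auto)

lemma lookup_xmon_mult_x1: "Poly_Mapping.lookup (xmon \<alpha> * x1) \<beta> = (if \<beta> = \<alpha> + e1 then 1 else 0)"
  by (simp add: xmon_def x1_def mult_single lookup_single)

theorem proposition2:
  fixes n :: nat and fs :: "cpoly list"
    and ba :: "mon list" and br :: "mon list" and Be :: "mon set" and be_hat :: "mon list"
    and T :: "nat \<Rightarrow> mon set" and rows :: "(nat \<times> mon) list"
    and A21 :: "complex mat" and A22 :: "complex mat"
  assumes n: "n \<ge> 1"
    and fs_vars: "\<forall>i<length fs. in_vars n (fs ! i)"
    and basis: "quotient_basis n fs ba"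
    and br_def: "distinct br" "set br = {\<alpha> + e1 | \<alpha>. \<alpha> \<in> set ba} - set ba"
    and T_fin: "\<forall>i<length fs. finite (T i) \<and> (\<forall>t\<in>T i. in_vars n (xmon t))"
    and split: "(\<Union>i<length fs. \<Union>t\<in>T i. Poly_Mapping.keys (xmon t * fs ! i)) = Be \<union> set br \<union> set ba"
      "Be \<inter> set br = {}" "Be \<inter> set ba = {}" "set br \<inter> set ba = {}"
    and be_hat: "distinct be_hat" "set be_hat \<subseteq> Be"
    and rows: "distinct rows" "set rows = {(i, t). i < length fs \<and> t \<in> T i}"
    and rows_len: "length rows = length be_hat + length br"
  defines "ne \<equiv> length be_hat" and "nr \<equiv> length br" and "r \<equiv> length ba"
  defines "Chat \<equiv> mat (length rows) (length (be_hat @ br @ ba))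
              (\<lambda>(k, l). Poly_Mapping.lookup (xmon (snd (rows ! k)) * fs ! fst (rows ! k)) ((be_hat @ br @ ba) ! l))"
  defines "A12 \<equiv> mat (ne + nr) (ne + nr) (\<lambda>(i, j). Chat $$ (i, j))"
    and "A11 \<equiv> mat (ne + nr) r (\<lambda>(i, j). Chat $$ (i, ne + nr + j))"
    and "C22 \<equiv> mat nr nr (\<lambda>(i, j). Chat $$ (ne + i, ne + j))"
  assumes C22_inv: "invertible_mat C22"
    and A12_inv: "invertible_mat A12"
  defines "G \<equiv> gauss_jordan_single Chat"
  defines "C13' \<equiv> mat ne r (\<lambda>(i, j). G $$ (i, ne + nr + j))"
    and "C23' \<equiv> mat nr r (\<lambda>(i, j). G $$ (ne + i, ne + nr + j))"
  defines "Mf \<equiv> mat r r (\<lambda>(j, i).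
              if ba ! j + e1 \<in> set ba then (if ba ! i = ba ! j + e1 then 1 else 0)
              else - C23' $$ (THE k. k < nr \<and> br ! k = ba ! j + e1, i))"
  assumes A21: "A21 \<in> carrier_mat r r" and A22: "A22 \<in> carrier_mat r (ne + nr)"
    and lower_block: "\<forall>u0 j l. j < r \<longrightarrow> l < r + ne + nr \<longrightarrow>
          Poly_Mapping.lookup (xmon (ba ! j) * (x1 - cconst u0)) ((ba @ be_hat @ br) ! l) =
          (if l < r then (A21 - u0 \<cdot>\<^sub>m 1\<^sub>m r) $$ (j, l) else A22 $$ (j, l - r))"
  defines "A12inv \<equiv> the (mat_inverse A12)"
  defines "X \<equiv> A21 - A22 * A12inv * A11"
  shows "X = Mf \<and>
         A12inv * A11 = four_block_mat C13' (0\<^sub>m ne 0) C23' (0\<^sub>m nr 0) \<and>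
         Chat \<in> carrier_mat (dim_row A11) (dim_col A11 + dim_col A12)"
proof -
  define N where "N = ne + nr"
  define R where "R = A12inv * A11"
  have Chat: "Chat \<in> carrier_mat N (N + r)"
    by (simp add: Chat_def rows_len ne_def nr_def r_def N_def add.assoc)
  have R_eq: "R = mat N r (\<lambda>(i, j). G $$ (i, N + j))"
    using gauss_jordan_single_right_block[OF Chat] A12_inv
    unfolding R_def A12inv_def A12_def A11_def G_def N_def by simp
  have "R = four_block_mat C13' (0\<^sub>m ne 0) C23' (0\<^sub>m nr 0)"
    by (rule eq_matI) (auto simp: R_eq C13'_def C23'_def N_def)
  moreover have "X = Mf"
  proof -
    have lower: "Poly_Mapping.lookup (xmon (ba ! j) * x1) ((ba @ be_hat @ br) ! l)
        = (if l < r then A21 $$ (j, l) else A22 $$ (j, l - r))" if "j < r" "l < r + N" for j l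
      using lower_block[rule_format, of j l 0] that A21 by (simp add: cconst_def N_def)
    have "A12inv \<in> carrier_mat N N"
      using invertible_mat_mat_inverse(3)[OF _ A12_inv] by (simp add: A12inv_def A12_def N_def)
    moreover have "A11 \<in> carrier_mat N r" by (simp add: A11_def N_def)
    ultimately have "X = A21 - A22 * R"
      using A22 assoc_mult_mat[of A22 r N A12inv N A11 r] by (simp add: X_def R_def N_def)
    also have "\<dots> = Mf"
      unfolding Mf_def r_def nr_def
    proof (rule schur_complement_eq_action_matrix[where s = "\<lambda>\<alpha>. \<alpha> + e1" and cs = be_hat])
      show "A21 \<in> carrier_mat (length ba) (length ba)" using A21 by (simp add: r_def)
      show "A22 \<in> carrier_mat (length ba) (length (be_hat @ br))"
        using A22 by (simp add: r_def ne_def nr_def)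
      show "R \<in> carrier_mat (length (be_hat @ br)) (length ba)"
        by (simp add: R_eq N_def r_def ne_def nr_def)
      show "distinct (be_hat @ br)" using be_hat br_def(1) split(2) by auto
      show "set (be_hat @ br) \<inter> set ba = {}" using be_hat(2) split(3,4) by auto
      show "ba ! j + e1 \<in> set br" if "j < length ba" "ba ! j + e1 \<notin> set ba" for j
        using that br_def(2) by auto
      show "A21 $$ (j, i) = (if ba ! i = ba ! j + e1 then 1 else 0)"
        if "j < length ba" "i < length ba" for j i
        using lower[of j i] that by (simp add: r_def nth_append lookup_xmon_mult_x1 eq_commute)
      show "A22 $$ (j, k) = (if (be_hat @ br) ! k = ba ! j + e1 then 1 else 0)"
        if "j < length ba" "k < length (be_hat @ br)" for j k
        using lower[of j "r + k"] that
        by (simp add: r_def N_def ne_def nr_def nth_append lookup_xmon_mult_x1 eq_commute)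
      show "C23' $$ (k, i) = R $$ (length be_hat + k, i)" if "k < length br" "i < length ba" for k i
        using that by (simp add: C23'_def R_eq N_def ne_def nr_def r_def)
    qed
    finally show ?thesis .
  qed
  moreover have "Chat \<in> carrier_mat (dim_row A11) (dim_col A11 + dim_col A12)"
    using Chat by (simp add: A11_def A12_def N_def add.commute)
  ultimately show ?thesis unfolding R_def by blast
qed

end
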